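(* Let $\gamma\ge1$, $t\ge1$ an integer, $\varepsilon\in(0,1)$, and $B$ with $\gamma t\le B\le|A|$. Let $(x,y,p)$ be a $\gamma t$-SLEO with income distribution $\mathcal{I}$ uniform on $[1-\varepsilon,1]$ and total budget $B$, and let $C\subseteq A$ with $|C|\ge t$ contain every $a\in A$ with $y_a=1$. Then for every $c\in A\setminus C$: (i) $\sum_{v\in V}p_{v,c}\le \gamma t\cdot|V|\cdot\frac1B\cdot\mathbb{E}_{b\sim\mathcal{I}}[b]$; (ii) the number of voters $v$ that are $t$-covered by $C$ and satisfy $c\succ_v^t C$ is at most $\frac{\gamma t}{B(1-\varepsilon)}\cdot|V|$.
   Context: An election $(V,A,\succ)$: finite nonempty voter set $V$, finite candidate set $A$, strict linear order $\succ_v$ on $A$ per voter, extended to $A\cup\{\emptyset\}$ with $\emptyset$ strictly below all candidates. For $C\subseteq A$ with $|C|\ge t$ and $a\in A\setminus C$: $C\succ_v^t a$ iff $|\{c\in C: c\succ_v a\}|\ge t$, otherwise $a\succ_v^t C$. Given prices $p_v\in[0,1]^{A\cup\{\emptyset\}}$ with $p_{v,\emptyset}=0$ and income $b\ge0$, voter $v$'s demand is the $\succ_v$-maximal element of $\{a\in A\cup\{\emptyset\}: p_{v,a}\le b\}$; $\mathcal{D}_v(p_v,\mathcal{I})$ is this demand with $b\sim\mathcal{I}$. For $s>0$, $B>0$, an $s$-SLEO $(x,y,p)$ with income $\mathcal{I}$ and budget $B$: prices $p_v\in[0,1]^{A\cup\{\emptyset\}}$ with $p_{v,\emptyset}=0$,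 consumptions $x_v\in[0,1]^{A\cup\{\emptyset\}}$, and $y\in[0,1]^A$, with (1) $x_{v,a}=\Pr[\mathcal{D}_v(p_v,\mathcal{I})=a]$ for all $a\in A\cup\{\emptyset\}$; (2) $s\,x_{v,a}\le y_a$ for all $a\in A$, and $p_{v,a}=0$ whenever $s\,x_{v,a}<y_a$; (3) $y$ maximizes $\sum_a(\sum_v p_{v,a})z_a$ over $z\in[0,1]^A$ with $\sum_a z_a=B$. The boundary candidate of $v$ is $a_v=$ the $\succ_v$-maximal element of $\{a\in A\cup\{\emptyset\}: p_{v,a}\le1-\varepsilon\}$. A voter $v$ is $t$-covered by $C$ if $|\{c\in C: c\succ_v a_v\}|\ge t$. *)

theory Defs
  imports "HOL-Probability.Probability"
begin

text \<open>Candidates have type 'a; the option type models A \<union> {\<emptyset>} with None = \<emptyset>.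
  pref v a b means a \<succ>_v b (a strictly preferred to b by voter v).\<close>

definition strict_linear_on :: "'a set \<Rightarrow> ('a \<Rightarrow> 'a \<Rightarrow> bool) \<Rightarrow> bool" where
  "strict_linear_on A r \<longleftrightarrow>
     (\<forall>a\<in>A. \<not> r a a) \<and>
     (\<forall>a\<in>A. \<forall>b\<in>A. \<forall>c\<in>A. r a b \<longrightarrow> r b c \<longrightarrow> r a c) \<and>
     (\<forall>a\<in>A. \<forall>b\<in>A. a \<noteq> b \<longrightarrow> r a b \<or> r b a)"

definition election :: "'v set \<Rightarrow> 'a set \<Rightarrow> ('v \<Rightarrow> 'a \<Rightarrow> 'a \<Rightarrow> bool) \<Rightarrow> bool" where
  "election V A pref \<longleftrightarrow> finite V \<and> V \<noteq> {} \<and> finite A \<and>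
     (\<forall>v\<in>V. strict_linear_on A (pref v))"

fun ext_pref :: "('v \<Rightarrow> 'a \<Rightarrow> 'a \<Rightarrow> bool) \<Rightarrow> 'v \<Rightarrow> 'a option \<Rightarrow> 'a option \<Rightarrow> bool" where
  "ext_pref pref v (Some a) (Some b) = pref v a b"
| "ext_pref pref v (Some a) None = True"
| "ext_pref pref v None _ = False"

definition pref_max :: "('v \<Rightarrow> 'a \<Rightarrow> 'a \<Rightarrow> bool) \<Rightarrow> 'v \<Rightarrow> 'a option set \<Rightarrow> 'a option" where
  "pref_max pref v S = (THE m. m \<in> S \<and> (\<forall>w\<in>S. w \<noteq> m \<longrightarrow> ext_pref pref v m w))"

definition affordable :: "'a set \<Rightarrow> ('a option \<Rightarrow> real) \<Rightarrow> real \<Rightarrow> 'a option set" where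
  "affordable A pv b = {w \<in> insert None (Some ` A). pv w \<le> b}"

definition demand :: "'a set \<Rightarrow> ('v \<Rightarrow> 'a \<Rightarrow> 'a \<Rightarrow> bool) \<Rightarrow> ('v \<Rightarrow> 'a option \<Rightarrow> real)
    \<Rightarrow> 'v \<Rightarrow> real \<Rightarrow> 'a option" where
  "demand A pref p v b = pref_max pref v (affordable A (p v) b)"

definition SLEO :: "'v set \<Rightarrow> 'a set \<Rightarrow> ('v \<Rightarrow> 'a \<Rightarrow> 'a \<Rightarrow> bool) \<Rightarrow> real \<Rightarrow> real measure \<Rightarrow> real
    \<Rightarrow> ('v \<Rightarrow> 'a option \<Rightarrow> real) \<Rightarrow> ('a \<Rightarrow> real) \<Rightarrow> ('v \<Rightarrow> 'a option \<Rightarrow> real) \<Rightarrow> bool" where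
  "SLEO V A pref s I B x y p \<longleftrightarrow>
     (\<forall>v\<in>V. p v None = 0 \<and> (\<forall>a\<in>A. 0 \<le> p v (Some a) \<and> p v (Some a) \<le> 1)) \<and>
     (\<forall>v\<in>V. \<forall>w\<in>insert None (Some ` A). 0 \<le> x v w \<and> x v w \<le> 1) \<and>
     (\<forall>a\<in>A. 0 \<le> y a \<and> y a \<le> 1) \<and>
     (\<forall>v\<in>V. \<forall>w\<in>insert None (Some ` A).
        x v w = measure I {b \<in> space I. demand A pref p v b = w}) \<and>
     (\<forall>v\<in>V. \<forall>a\<in>A. s * x v (Some a) \<le> y a \<and>
        (s * x v (Some a) < y a \<longrightarrow> p v (Some a) = 0)) \<and>
     (\<Sum>a\<in>A. y a) = B \<and>
     (\<forall>z. (\<forall>a\<in>A. 0 \<le> z a \<and> z a \<le> 1) \<and> (\<Sum>a\<in>A. z a) = B \<longrightarrow>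
        (\<Sum>a\<in>A. (\<Sum>v\<in>V. p v (Some a)) * z a) \<le> (\<Sum>a\<in>A. (\<Sum>v\<in>V. p v (Some a)) * y a))"

definition boundary :: "'a set \<Rightarrow> ('v \<Rightarrow> 'a \<Rightarrow> 'a \<Rightarrow> bool) \<Rightarrow> ('v \<Rightarrow> 'a option \<Rightarrow> real)
    \<Rightarrow> real \<Rightarrow> 'v \<Rightarrow> 'a option" where
  "boundary A pref p \<epsilon> v = pref_max pref v (affordable A (p v) (1 - \<epsilon>))"

definition t_covered :: "'a set \<Rightarrow> ('v \<Rightarrow> 'a \<Rightarrow> 'a \<Rightarrow> bool) \<Rightarrow> ('v \<Rightarrow> 'a option \<Rightarrow> real)
    \<Rightarrow> real \<Rightarrow> nat \<Rightarrow> 'a set \<Rightarrow> 'v \<Rightarrow> bool" where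
  "t_covered A pref p \<epsilon> t C v \<longleftrightarrow>
     card {c \<in> C. ext_pref pref v (Some c) (boundary A pref p \<epsilon> v)} \<ge> t"

definition beats_t :: "('v \<Rightarrow> 'a \<Rightarrow> 'a \<Rightarrow> bool) \<Rightarrow> nat \<Rightarrow> 'v \<Rightarrow> 'a \<Rightarrow> 'a set \<Rightarrow> bool" where
  "beats_t pref t v a C \<longleftrightarrow> \<not> (card {c \<in> C. pref v c a} \<ge> t)"

end

theory Submission
  imports Defs
begin

text \<open>
  Write \<open>P a = \<Sum>v. p v a\<close>. By complementary slackness a voter only pays for candidates she
  consumes at full rate, so the LP objective \<open>\<Sum>a. P a y a\<close> equals \<open>\<gamma>t\<close> times the total expected
  spending, and each voter spends at most her income, i.e. at most \<open>E[b]\<close> in expectation. Since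
  \<open>c \<notin> C\<close> we have \<open>y c < 1\<close>, so optimality of \<open>y\<close> gives \<open>P c \<le> P a\<close> whenever \<open>y a > 0\<close>
  (otherwise moving allocation from \<open>a\<close> to \<open>c\<close> would improve the objective); hence
  \<open>P c B \<le> \<Sum>a. P a y a\<close>, which is (i).
  A \<open>t\<close>-covered voter with \<open>c \<succ>\<^sup>t C\<close> prefers \<open>c\<close> to her boundary candidate, so \<open>c\<close> is not
  affordable at income \<open>1 - \<epsilon>\<close>: \<open>p v c > 1 - \<epsilon>\<close>. Summing over these voters and using
  \<open>E[b] \<le> 1\<close> in (i) gives (ii).
\<close>

lemma strict_linear_on_irrefl: "strict_linear_on U r \<Longrightarrow> a \<in> U \<Longrightarrow> \<not> r a a"
  by (simp add: strict_linear_on_def)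

lemma strict_linear_on_trans:
  assumes "strict_linear_on U r" "a \<in> U" "b \<in> U" "c \<in> U" "r a b" "r b c"
  shows "r a c"
  using assms unfolding strict_linear_on_def by (elim conjE) blast

lemma strict_linear_on_total:
  assumes "strict_linear_on U r" "a \<in> U" "b \<in> U" "a \<noteq> b"
  shows "r a b \<or> r b a"
  using assms unfolding strict_linear_on_def by (elim conjE) blast

lemma strict_linear_on_asym: "strict_linear_on U r \<Longrightarrow> a \<in> U \<Longrightarrow> b \<in> U \<Longrightarrow> r a b \<Longrightarrow> \<not> r b a"
  by (metis strict_linear_on_irrefl strict_linear_on_trans)

lemma strict_linear_on_ext_pref:
  assumes "strict_linear_on A (pref v)"
  shows "strict_linear_on (insert None (Some ` A)) (ext_pref pref v)"
  unfolding strict_linear_on_def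
proof (intro conjI ballI impI)
  fix w assume "w \<in> insert None (Some ` A)"
  then show "\<not> ext_pref pref v w w"
    by (cases w) (auto dest: strict_linear_on_irrefl[OF assms])
next
  fix w1 w2 w3 assume "w1 \<in> insert None (Some ` A)" "w2 \<in> insert None (Some ` A)"
    "w3 \<in> insert None (Some ` A)" "ext_pref pref v w1 w2" "ext_pref pref v w2 w3"
  then show "ext_pref pref v w1 w3"
    by (cases w1; cases w2; cases w3) (auto intro: strict_linear_on_trans[OF assms])
next
  fix w1 w2 assume "w1 \<in> insert None (Some ` A)" "w2 \<in> insert None (Some ` A)" "w1 \<noteq> w2"
  then show "ext_pref pref v w1 w2 \<or> ext_pref pref v w2 w1"
    by (cases w1; cases w2) (auto dest: strict_linear_on_total[OF assms])
qed

lemma strict_linear_on_ex1_greatest: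
  assumes slo: "strict_linear_on U r" and "finite S" "S \<noteq> {}" "S \<subseteq> U"
  shows "\<exists>!m. m \<in> S \<and> (\<forall>w\<in>S. w \<noteq> m \<longrightarrow> r m w)"
proof -
  have "\<exists>m\<in>S. \<forall>w\<in>S. w \<noteq> m \<longrightarrow> r m w"
    using assms(2-4)
  proof (induction S rule: finite_ne_induct)
    case (singleton x)
    then show ?case by simp
  next
    case (insert x F)
    then obtain m where m: "m \<in> F" "\<forall>w\<in>F. w \<noteq> m \<longrightarrow> r m w" and "x \<in> U" "F \<subseteq> U"
      by auto
    show ?case
    proof (cases "r m x")
      case True
      then show ?thesis using m by auto
    next
      case False
      moreover have "x \<noteq> m"
        using m insert.hyps by blast
      ultimately have "r x m"
        using strict_linear_on_total[OF slo \<open>x \<in> U\<close>, of m] m \<open>F \<subseteq> U\<close> by blast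
      have "r x w" if "w \<in> F" for w
      proof (cases "w = m")
        case True
        then show ?thesis using \<open>r x m\<close> by simp
      next
        case False
        then have "r m w" using m that by blast
        moreover have "m \<in> U" "w \<in> U" using m that \<open>F \<subseteq> U\<close> by auto
        ultimately show ?thesis
          using strict_linear_on_trans[OF slo \<open>x \<in> U\<close>] \<open>r x m\<close> by blast
      qed
      then show ?thesis by blast
    qed
  qed
  then obtain m where m: "m \<in> S" "\<forall>w\<in>S. w \<noteq> m \<longrightarrow> r m w"
    by blast
  show ?thesis
  proof (rule ex1I[of _ m])
    fix m' assume m': "m' \<in> S \<and> (\<forall>w\<in>S. w \<noteq> m' \<longrightarrow> r m' w)"
    show "m' = m"
    proof (rule ccontr)
      assume "m' \<noteq> m"
      then have "r m' m" "r m m'" using m m' by auto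
      moreover have "m \<in> U" "m' \<in> U" using m m' assms(4) by auto
      ultimately show False using strict_linear_on_asym[OF slo] by blast
    qed
  qed (use m in blast)
qed

lemma
  assumes "strict_linear_on A (pref v)" "finite S" "S \<noteq> {}" "S \<subseteq> insert None (Some ` A)"
  shows pref_max_in: "pref_max pref v S \<in> S"
    and pref_max_preferred:
      "\<And>w. w \<in> S \<Longrightarrow> w \<noteq> pref_max pref v S \<Longrightarrow> ext_pref pref v (pref_max pref v S) w"
  using theI'[OF strict_linear_on_ex1_greatest[OF
        strict_linear_on_ext_pref[where pref=pref and v=v, OF assms(1)] assms(2-4)]]
  unfolding pref_max_def by blast+

lemma affordable_subset: "affordable A pv b \<subseteq> insert None (Some ` A)"
  unfolding affordable_def by auto

lemma finite_affordable: "finite A \<Longrightarrow> finite (affordable A pv b)"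
  unfolding affordable_def by auto

lemma None_in_affordable: "pv None = 0 \<Longrightarrow> 0 \<le> b \<Longrightarrow> None \<in> affordable A pv b"
  unfolding affordable_def by auto

lemma
  assumes "strict_linear_on A (pref v)" "finite A" "pv None = 0" "0 \<le> b"
  shows pref_max_affordable_in: "pref_max pref v (affordable A pv b) \<in> affordable A pv b"
    and pref_max_affordable_preferred:
      "\<And>w. w \<in> affordable A pv b \<Longrightarrow> w \<noteq> pref_max pref v (affordable A pv b) \<Longrightarrow>
         ext_pref pref v (pref_max pref v (affordable A pv b)) w"
  using pref_max_in pref_max_preferred assms finite_affordable affordable_subset None_in_affordable
  by (metis empty_iff)+

lemma preferred_to_pref_max_unaffordable:
  assumes slo: "strict_linear_on A (pref v)" and "finite A" "pv None = 0" "0 \<le> b" "a \<in> A"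
    and pref: "ext_pref pref v (Some a) (pref_max pref v (affordable A pv b))"
  shows "b < pv (Some a)"
proof (rule ccontr)
  let ?m = "pref_max pref v (affordable A pv b)"
  assume "\<not> b < pv (Some a)"
  then have "Some a \<in> affordable A pv b"
    using \<open>a \<in> A\<close> unfolding affordable_def by auto
  moreover have "Some a \<noteq> ?m"
    using pref strict_linear_on_irrefl[OF slo \<open>a \<in> A\<close>] by (metis ext_pref.simps(1))
  ultimately have "ext_pref pref v ?m (Some a)"
    using pref_max_affordable_preferred[where pref=pref and v=v and pv=pv, OF assms(1-4)]
    by blast
  moreover have "?m \<in> insert None (Some ` A)"
    using pref_max_affordable_in[where pref=pref and v=v and pv=pv, OF assms(1-4)] affordable_subset
    by blast
  ultimately show False
    using strict_linear_on_asym[OF strict_linear_on_ext_pref[where pref=pref and v=v, OF slo]]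
      pref \<open>a \<in> A\<close>
    by blast
qed

lemma preferred_if_fewer_above:
  assumes slo: "strict_linear_on A (pref v)" and "finite C" "C \<subseteq> A" "c \<in> A"
    and m: "m \<in> insert None (Some ` A)"
    and "t \<le> card {c' \<in> C. ext_pref pref v (Some c') m}" "\<not> t \<le> card {c' \<in> C. pref v c' c}"
  shows "ext_pref pref v (Some c) m"
proof (rule ccontr)
  note ext = strict_linear_on_ext_pref[where pref=pref and v=v, OF slo]
  assume "\<not> ext_pref pref v (Some c) m"
  then have "m = Some c \<or> ext_pref pref v m (Some c)"
    using strict_linear_on_total[OF ext _ m] \<open>c \<in> A\<close> by blast
  have "pref v c' c" if "c' \<in> C" "ext_pref pref v (Some c') m" for c'
    using \<open>m = Some c \<or> ext_pref pref v m (Some c)\<close>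
  proof
    assume "m = Some c"
    then show ?thesis using that(2) by simp
  next
    assume "ext_pref pref v m (Some c)"
    moreover have "Some c' \<in> insert None (Some ` A)" "Some c \<in> insert None (Some ` A)"
      using that(1) \<open>C \<subseteq> A\<close> \<open>c \<in> A\<close> by auto
    ultimately have "ext_pref pref v (Some c') (Some c)"
      using strict_linear_on_trans[OF ext _ m] that(2) by blast
    then show ?thesis by simp
  qed
  then have "{c' \<in> C. ext_pref pref v (Some c') m} \<subseteq> {c' \<in> C. pref v c' c}"
    by blast
  then have "card {c' \<in> C. ext_pref pref v (Some c') m} \<le> card {c' \<in> C. pref v c' c}"
    using \<open>finite C\<close> by (intro card_mono) auto
  then show False
    using assms(6,7) by linarith
qed

lemma affordable_eq_iff:
  assumes "S \<subseteq> insert None (Some ` A)"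
  shows "affordable A pv b = S \<longleftrightarrow> (\<forall>u\<in>insert None (Some ` A). u \<in> S \<longleftrightarrow> pv u \<le> b)"
proof
  assume "affordable A pv b = S"
  then show "\<forall>u\<in>insert None (Some ` A). u \<in> S \<longleftrightarrow> pv u \<le> b"
    unfolding affordable_def by blast
next
  assume S: "\<forall>u\<in>insert None (Some ` A). u \<in> S \<longleftrightarrow> pv u \<le> b"
  show "affordable A pv b = S"
  proof (rule set_eqI)
    fix u
    show "u \<in> affordable A pv b \<longleftrightarrow> u \<in> S"
      using assms S unfolding affordable_def by blast
  qed
qed

text \<open>The affordable set takes finitely many values, each on a finite Boolean combination of
  half-lines.\<close>

lemma sets_borel_affordable_level:
  assumes "finite A"
  shows "{b. f (affordable A pv b) = w} \<in> sets borel"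
proof -
  let ?U = "insert None (Some ` A)"
  have "{b. f (affordable A pv b) = w} =
      (\<Union>S \<in> {S. S \<subseteq> ?U \<and> f S = w}. {b. affordable A pv b = S})"
  proof (intro set_eqI iffI)
    fix b assume "b \<in> {b. f (affordable A pv b) = w}"
    then show "b \<in> (\<Union>S \<in> {S. S \<subseteq> ?U \<and> f S = w}. {b. affordable A pv b = S})"
      by (intro UN_I[of "affordable A pv b"]) (auto simp: affordable_subset)
  qed auto
  also have "\<dots> = (\<Union>S \<in> {S. S \<subseteq> ?U \<and> f S = w}. {b. \<forall>u\<in>?U. u \<in> S \<longleftrightarrow> pv u \<le> b})"
    by (intro SUP_cong refl) (simp add: affordable_eq_iff)
  also have "\<dots> \<in> sets borel"
    using assms by (intro sets.finite_UN) (auto intro: finite_subset[of _ "Pow ?U"])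
  finally show ?thesis .
qed

lemma expected_spending_le_expected_income:
  fixes I :: "real measure"
  assumes slo: "strict_linear_on A (pref v)" and "finite A" and "p v None = 0"
    and "prob_space I" and sets_I: "sets I = sets borel"
    and "AE b in I. 0 \<le> b" and "integrable I (\<lambda>b. b)"
  shows "(\<Sum>a\<in>A. p v (Some a) * measure I {b \<in> space I. demand A pref p v b = Some a})
           \<le> (\<integral>b. b \<partial>I)"
proof -
  interpret prob_space I by fact
  let ?D = "\<lambda>a. {b. demand A pref p v b = Some a}"
  let ?spent = "\<lambda>b. \<Sum>a\<in>A. p v (Some a) * indicator (?D a) b"
  have "space I = UNIV"
    using sets_eq_imp_space_eq[OF sets_I] by simp
  have "?D a \<in> sets I" for a
    using sets_borel_affordable_level[OF \<open>finite A\<close>] sets_I unfolding demand_def by simp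
  then have int: "integrable I (\<lambda>b. p v (Some a) * indicator (?D a) b)" for a
    by (simp add: emeasure_finite less_top[symmetric])
  have spent_le: "?spent b \<le> b" if "0 \<le> b" for b
  proof (cases "demand A pref p v b")
    case None
    then show ?thesis using that by (simp add: indicator_def)
  next
    case (Some a0)
    have "Some a0 \<in> affordable A (p v) b"
      using pref_max_affordable_in[where pref=pref and v=v and pv="p v",
          OF slo \<open>finite A\<close> \<open>p v None = 0\<close> that] Some
      unfolding demand_def by simp
    then have "a0 \<in> A" "p v (Some a0) \<le> b"
      unfolding affordable_def by auto
    moreover have "?spent b = (\<Sum>a\<in>A. if a = a0 then p v (Some a) else 0)"
      using Some by (intro sum.cong) (auto simp: indicator_def)
    ultimately show ?thesis
      using \<open>finite A\<close> by (simp add: sum.delta')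
  qed
  have "AE b in I. ?spent b \<le> b"
    using assms(6) by eventually_elim (rule spent_le)
  have "(\<Sum>a\<in>A. p v (Some a) * measure I {b \<in> space I. demand A pref p v b = Some a})
      = (\<Sum>a\<in>A. \<integral>b. p v (Some a) * indicator (?D a) b \<partial>I)"
    using \<open>space I = UNIV\<close> by simp
  also have "\<dots> = (\<integral>b. ?spent b \<partial>I)"
    by (rule Bochner_Integration.integral_sum[symmetric]) (rule int)
  also have "\<dots> \<le> (\<integral>b. b \<partial>I)"
    using int \<open>integrable I (\<lambda>b. b)\<close> \<open>AE b in I. ?spent b \<le> b\<close> by (intro integral_mono_AE) auto
  finally show ?thesis .
qed

definition optimal_allocation :: "'a set \<Rightarrow> ('a \<Rightarrow> real) \<Rightarrow> ('a \<Rightarrow> real) \<Rightarrow> bool" where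
  "optimal_allocation A P y \<longleftrightarrow> (\<forall>a\<in>A. 0 \<le> y a \<and> y a \<le> 1) \<and>
     (\<forall>z. (\<forall>a\<in>A. 0 \<le> z a \<and> z a \<le> 1) \<and> sum z A = sum y A \<longrightarrow>
        (\<Sum>a\<in>A. P a * z a) \<le> (\<Sum>a\<in>A. P a * y a))"

lemma optimal_allocation_exchange:
  fixes P y :: "'a \<Rightarrow> real"
  assumes "finite A" and opt: "optimal_allocation A P y"
    and "a \<in> A" "c \<in> A" "0 < y a" "y c < 1"
  shows "P c \<le> P a"
proof (rule ccontr)
  assume "\<not> P c \<le> P a"
  then have "a \<noteq> c" "P a < P c" by auto
  define \<delta> where "\<delta> = min (y a) (1 - y c)"
  define z where "z a' = y a' + (if a' = c then \<delta> else 0) - (if a' = a then \<delta> else 0)" for a'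
  have y01: "\<forall>a\<in>A. 0 \<le> y a \<and> y a \<le> 1"
    using opt unfolding optimal_allocation_def by blast
  have "0 < \<delta>"
    using assms(5,6) unfolding \<delta>_def by simp
  have "\<forall>a'\<in>A. 0 \<le> z a' \<and> z a' \<le> 1"
  proof
    fix a' assume "a' \<in> A"
    then show "0 \<le> z a' \<and> z a' \<le> 1"
      using bspec[OF y01 \<open>a' \<in> A\<close>] bspec[OF y01 \<open>a \<in> A\<close>] bspec[OF y01 \<open>c \<in> A\<close>] \<open>a \<noteq> c\<close>
      unfolding z_def \<delta>_def by (auto simp: min_def)
  qed
  moreover have "sum z A = sum y A"
    using assms(1,3,4) unfolding z_def by (simp add: sum.distrib sum_subtractf)
  ultimately have "(\<Sum>a'\<in>A. P a' * z a') \<le> (\<Sum>a'\<in>A. P a' * y a')"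
    using opt unfolding optimal_allocation_def by blast
  moreover have "(\<Sum>a'\<in>A. P a' * z a') = (\<Sum>a'\<in>A. P a' * y a') + \<delta> * (P c - P a)"
    using assms(1,3,4) unfolding z_def
    by (simp add: algebra_simps sum.distrib sum_subtractf if_distrib[of "\<lambda>t. P _ * t"] sum.delta')
  moreover have "0 < \<delta> * (P c - P a)"
    using \<open>0 < \<delta>\<close> \<open>P a < P c\<close> by simp
  ultimately show False
    by linarith
qed

lemma optimal_allocation_value_ge:
  fixes P y :: "'a \<Rightarrow> real"
  assumes "finite A" and opt: "optimal_allocation A P y" and "c \<in> A" "y c < 1"
  shows "P c * sum y A \<le> (\<Sum>a\<in>A. P a * y a)"
proof -
  have "P c * y a \<le> P a * y a" if "a \<in> A" for a
  proof (cases "y a = 0")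
    case False
    then have "0 < y a"
      using opt that unfolding optimal_allocation_def by force
    then show ?thesis
      using optimal_allocation_exchange[OF assms(1,2) that assms(3) _ assms(4)] by simp
  qed simp
  then show ?thesis
    by (simp add: sum_distrib_left sum_mono)
qed

lemma SLEO_price_None: "SLEO V A pref s I B x y p \<Longrightarrow> v \<in> V \<Longrightarrow> p v None = 0"
  unfolding SLEO_def by auto

lemma SLEO_price_nonneg:
  "SLEO V A pref s I B x y p \<Longrightarrow> v \<in> V \<Longrightarrow> a \<in> A \<Longrightarrow> 0 \<le> p v (Some a)"
  unfolding SLEO_def by auto

lemma SLEO_allocation_bounds: "SLEO V A pref s I B x y p \<Longrightarrow> \<forall>a\<in>A. 0 \<le> y a \<and> y a \<le> 1"
  unfolding SLEO_def by auto

lemma SLEO_consumption: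
  "SLEO V A pref s I B x y p \<Longrightarrow> v \<in> V \<Longrightarrow> a \<in> A \<Longrightarrow>
     x v (Some a) = measure I {b \<in> space I. demand A pref p v b = Some a}"
  unfolding SLEO_def by auto

lemma SLEO_optimal_allocation:
  "SLEO V A pref s I B x y p \<Longrightarrow> optimal_allocation A (\<lambda>a. \<Sum>v\<in>V. p v (Some a)) y"
  unfolding SLEO_def optimal_allocation_def by auto

lemma SLEO_slackness:
  assumes "SLEO V A pref s I B x y p" "v \<in> V" "a \<in> A"
  shows "p v (Some a) * y a = s * (p v (Some a) * x v (Some a))"
proof -
  have "s * x v (Some a) \<le> y a" "s * x v (Some a) < y a \<longrightarrow> p v (Some a) = 0"
    using assms unfolding SLEO_def by auto
  then have "p v (Some a) = 0 \<or> y a = s * x v (Some a)"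
    by linarith
  then show ?thesis
    by auto
qed

lemma SLEO_revenue_eq:
  assumes "SLEO V A pref s I B x y p"
  shows "(\<Sum>a\<in>A. (\<Sum>v\<in>V. p v (Some a)) * y a) = s * (\<Sum>v\<in>V. \<Sum>a\<in>A. p v (Some a) * x v (Some a))"
proof -
  have "(\<Sum>a\<in>A. (\<Sum>v\<in>V. p v (Some a)) * y a) = (\<Sum>a\<in>A. \<Sum>v\<in>V. p v (Some a) * y a)"
    by (simp add: sum_distrib_right)
  also have "\<dots> = (\<Sum>a\<in>A. \<Sum>v\<in>V. s * (p v (Some a) * x v (Some a)))"
    using SLEO_slackness[OF assms] by (intro sum.cong refl)
  also have "\<dots> = s * (\<Sum>v\<in>V. \<Sum>a\<in>A. p v (Some a) * x v (Some a))"
    by (subst sum.swap) (simp add: sum_distrib_left)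
  finally show ?thesis .
qed

lemma SLEO_total_price_le:
  fixes I :: "real measure"
  assumes el: "election V A pref" and S: "SLEO V A pref s I B x y p" and "0 \<le> s" "0 < B"
    and I: "prob_space I" "sets I = sets borel" "AE b in I. 0 \<le> b" "integrable I (\<lambda>b. b)"
    and "c \<in> A" "y c < 1"
  shows "(\<Sum>v\<in>V. p v (Some c)) \<le> s * card V * (1 / B) * (\<integral>b. b \<partial>I)"
proof -
  have "finite A" and slo: "\<And>v. v \<in> V \<Longrightarrow> strict_linear_on A (pref v)"
    using el unfolding election_def by auto
  have "sum y A = B"
    using S unfolding SLEO_def by auto
  have "(\<Sum>v\<in>V. p v (Some c)) * B \<le> (\<Sum>a\<in>A. (\<Sum>v\<in>V. p v (Some a)) * y a)"
    using optimal_allocation_value_ge[OF \<open>finite A\<close> SLEO_optimal_allocation[OF S]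
        \<open>c \<in> A\<close> \<open>y c < 1\<close>] \<open>sum y A = B\<close>
    by simp
  also have "\<dots> = s * (\<Sum>v\<in>V. \<Sum>a\<in>A. p v (Some a) * x v (Some a))"
    by (rule SLEO_revenue_eq[OF S])
  also have "\<dots> \<le> s * (\<Sum>v\<in>V. \<integral>b. b \<partial>I)"
  proof (intro mult_left_mono sum_mono \<open>0 \<le> s\<close>)
    fix v assume "v \<in> V"
    show "(\<Sum>a\<in>A. p v (Some a) * x v (Some a)) \<le> (\<integral>b. b \<partial>I)"
      using expected_spending_le_expected_income[where pref=pref and v=v and p=p,
          OF slo[OF \<open>v \<in> V\<close>] \<open>finite A\<close> SLEO_price_None[OF S \<open>v \<in> V\<close>] I]
        SLEO_consumption[OF S \<open>v \<in> V\<close>]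
      by simp
  qed
  finally show ?thesis
    using \<open>0 < B\<close> by (simp add: field_simps)
qed

lemma card_covered_beats_mult_le:
  assumes el: "election V A pref" and S: "SLEO V A pref s I B x y p"
    and "\<epsilon> \<le> 1" "C \<subseteq> A" "c \<in> A"
  shows "real (card {v \<in> V. t_covered A pref p \<epsilon> t C v \<and> beats_t pref t v c C}) * (1 - \<epsilon>)
           \<le> (\<Sum>v\<in>V. p v (Some c))"
proof -
  let ?W = "{v \<in> V. t_covered A pref p \<epsilon> t C v \<and> beats_t pref t v c C}"
  have "finite A" "finite V" and slo: "\<And>v. v \<in> V \<Longrightarrow> strict_linear_on A (pref v)"
    using el unfolding election_def by auto
  have price_gt: "1 - \<epsilon> < p v (Some c)" if "v \<in> ?W" for v
  proof -
    let ?m = "boundary A pref p \<epsilon> v"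
    have "v \<in> V" "0 \<le> 1 - \<epsilon>"
      using that \<open>\<epsilon> \<le> 1\<close> by auto
    note choice = slo[OF \<open>v \<in> V\<close>] \<open>finite A\<close> SLEO_price_None[OF S \<open>v \<in> V\<close>] \<open>0 \<le> 1 - \<epsilon>\<close>
    have "?m \<in> insert None (Some ` A)"
      using pref_max_affordable_in[where pref=pref and v=v and pv="p v", OF choice] affordable_subset
      unfolding boundary_def by blast
    then have "ext_pref pref v (Some c) ?m"
      using preferred_if_fewer_above[where pref=pref and v=v,
          OF slo[OF \<open>v \<in> V\<close>] finite_subset[OF \<open>C \<subseteq> A\<close> \<open>finite A\<close>] \<open>C \<subseteq> A\<close> \<open>c \<in> A\<close>] that
      unfolding t_covered_def beats_t_def by blast
    then show ?thesis
      using preferred_to_pref_max_unaffordable[where pref=pref and v=v and pv="p v", OF choice \<open>c \<in> A\<close>]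
      unfolding boundary_def by blast
  qed
  have "real (card ?W) * (1 - \<epsilon>) = (\<Sum>v\<in>?W. 1 - \<epsilon>)"
    by simp
  also have "\<dots> \<le> (\<Sum>v\<in>?W. p v (Some c))"
    using price_gt by (intro sum_mono) (simp add: less_imp_le)
  also have "\<dots> \<le> (\<Sum>v\<in>V. p v (Some c))"
    using \<open>finite V\<close> SLEO_price_nonneg[OF S _ \<open>c \<in> A\<close>] by (intro sum_mono2) auto
  finally show ?thesis .
qed

lemma
  fixes l u :: real
  assumes "l < u"
  shows prob_space_uniform_Icc: "prob_space (uniform_measure lborel {l..u})"
    and AE_uniform_Icc: "AE b in uniform_measure lborel {l..u}. l \<le> b \<and> b \<le> u"
    and integrable_uniform_Icc: "integrable (uniform_measure lborel {l..u}) (\<lambda>b. b)"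
    and integral_uniform_Icc_le: "(\<integral>b. b \<partial>uniform_measure lborel {l..u}) \<le> u"
proof -
  show ps: "prob_space (uniform_measure lborel {l..u})"
    using assms by (intro prob_space_uniform_measure) auto
  show ae: "AE b in uniform_measure lborel {l..u}. l \<le> b \<and> b \<le> u"
    by (rule AE_uniform_measureI) auto
  interpret prob_space "uniform_measure lborel {l..u}"
    by (rule ps)
  show int: "integrable (uniform_measure lborel {l..u}) (\<lambda>b. b)"
  proof (rule integrable_const_bound)
    show "AE b in uniform_measure lborel {l..u}. norm b \<le> max \<bar>l\<bar> \<bar>u\<bar>"
      using ae by eventually_elim auto
  qed simp
  have "(\<integral>b. b \<partial>uniform_measure lborel {l..u}) \<le> (\<integral>b. u \<partial>uniform_measure lborel {l..u})"
    using int ae by (intro integral_mono_AE) (auto elim!: eventually_mono)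
  then show "(\<integral>b. b \<partial>uniform_measure lborel {l..u}) \<le> u"
    using prob_space by simp
qed

theorem mainTheorem11:
  fixes V :: "'v set" and A :: "'a set" and pref :: "'v \<Rightarrow> 'a \<Rightarrow> 'a \<Rightarrow> bool"
    and \<gamma> \<epsilon> B :: real and t :: nat and C :: "'a set" and c :: 'a
    and x p :: "'v \<Rightarrow> 'a option \<Rightarrow> real" and y :: "'a \<Rightarrow> real"
  assumes "election V A pref"
    and "\<gamma> \<ge> 1" and "t \<ge> 1" and "0 < \<epsilon>" and "\<epsilon> < 1"
    and "\<gamma> * t \<le> B" and "B \<le> card A"
    and "SLEO V A pref (\<gamma> * t) (uniform_measure lborel {1 - \<epsilon>..1}) B x y p"
    and "C \<subseteq> A" and "card C \<ge> t" and "\<forall>a\<in>A. y a = 1 \<longrightarrow> a \<in> C"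
    and "c \<in> A - C"
  shows "((\<Sum>v\<in>V. p v (Some c))
           \<le> \<gamma> * t * card V * (1 / B) * (\<integral>b. b \<partial>(uniform_measure lborel {1 - \<epsilon>..1}))) \<and>
         real (card {v \<in> V. t_covered A pref p \<epsilon> t C v \<and> beats_t pref t v c C})
           \<le> \<gamma> * t / (B * (1 - \<epsilon>)) * card V"
proof -
  let ?I = "uniform_measure lborel {1 - \<epsilon>..1}"
  have "1 \<le> \<gamma> * t"
    using mult_mono[of 1 \<gamma> 1 "real t"] assms(2,3) by simp
  then have "0 < B"
    using assms(6) by linarith
  have "c \<in> A" "y c < 1"
    using assms(11,12) bspec[OF SLEO_allocation_bounds[OF assms(8)], of c] by force+
  have "1 - \<epsilon> < 1" "0 \<le> 1 - \<epsilon>"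
    using assms(4,5) by simp_all
  note uniform = prob_space_uniform_Icc[OF \<open>1 - \<epsilon> < 1\<close>] AE_uniform_Icc[OF \<open>1 - \<epsilon> < 1\<close>]
    integrable_uniform_Icc[OF \<open>1 - \<epsilon> < 1\<close>] integral_uniform_Icc_le[OF \<open>1 - \<epsilon> < 1\<close>]
  have "AE b in ?I. 0 \<le> b"
    using uniform(2) by eventually_elim (use assms(5) in linarith)
  have price: "(\<Sum>v\<in>V. p v (Some c)) \<le> \<gamma> * t * card V * (1 / B) * (\<integral>b. b \<partial>?I)"
    using SLEO_total_price_le[OF assms(1,8) _ \<open>0 < B\<close> uniform(1) _ \<open>AE b in ?I. 0 \<le> b\<close> uniform(3)
        \<open>c \<in> A\<close> \<open>y c < 1\<close>] \<open>1 \<le> \<gamma> * t\<close>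
    by simp
  have "real (card {v \<in> V. t_covered A pref p \<epsilon> t C v \<and> beats_t pref t v c C}) * (1 - \<epsilon>)
      \<le> (\<Sum>v\<in>V. p v (Some c))"
    using card_covered_beats_mult_le[OF assms(1,8) _ assms(9) \<open>c \<in> A\<close>] assms(5) by simp
  also note price
  also have "\<gamma> * t * card V * (1 / B) * (\<integral>b. b \<partial>?I) \<le> \<gamma> * t * card V * (1 / B) * 1"
    using \<open>1 \<le> \<gamma> * t\<close> \<open>0 < B\<close> by (intro mult_left_mono uniform(4)) simp
  finally show ?thesis
    using price \<open>0 < B\<close> assms(5) by (simp add: field_simps)
qed

end
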